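(* Let $p$ be an odd prime, $m\in\{1,\ldots,p-1\}$, $d\ge0$ an integer, and $n=mp^d$. Then for every $i\in\mathbb{Z}_p$, \[ c^B_{p,i}(n)=\begin{cases} 2^{n-m}\,|\{\gamma\models_0 m: r^B_\gamma\equiv i\pmod p\}| & \text{if } i=0 \text{ or } d=0,\\ 2^{n-m-1}\,|\{\gamma\models_0 m: r^B_\gamma\equiv i\text{ or } r^B_\gamma\equiv -i\pmod p\}| & \text{otherwise.}\end{cases} \]
   Context: A signed permutation of $[n]$ is a bijection $w$ of $\{\pm1,\ldots,\pm n\}$ with $w(-i)=-w(i)$; these form $\mathfrak{S}^B_n$. With $w(0):=0$, $D(w)=\{i\in\{0,\ldots,n-1\}: w(i)>w(i+1)\}$. A pseudo-composition of $n$ ($\alpha\models_0 n$) is a sequence $(\alpha_1,\ldots,\alpha_\ell)$ of integers with $\alpha_1\ge0$, $\alpha_2,\ldots,\alpha_\ell>0$ and sum $n$, with $D(\alpha)=\{\alpha_1,\alpha_1+\alpha_2,\ldots,\alpha_1+\cdots+\alpha_{\ell-1}\}$. The type $B$ ribbon number is $r^B_\alpha=|\{w\in\mathfrak{S}^B_n: D(w)=D(\alpha)\}|$ and $c^B_{p,i}(n)=|\{\alpha\models_0 n: r^B_\alpha\equiv i\pmod p\}|$. *)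

theory Defs
  imports "HOL-Number_Theory.Number_Theory"
begin

text \<open>Signed permutations of [n], as functions on the integers: a bijection of
  {-n..n} - {0} commuting with negation, extended by the identity elsewhere
  (so w 0 = 0).\<close>
definition signed_perms :: "nat \<Rightarrow> (int \<Rightarrow> int) set" where
  "signed_perms n = {w. bij_betw w ({- int n..int n} - {0}) ({- int n..int n} - {0})
      \<and> (\<forall>i. w (- i) = - w i)
      \<and> (\<forall>i. i \<notin> {- int n..int n} - {0} \<longrightarrow> w i = i)}"

definition descents_B :: "nat \<Rightarrow> (int \<Rightarrow> int) \<Rightarrow> nat set" where
  "descents_B n w = {i. i < n \<and> w (int i) > w (int i + 1)}"

definition pseudo_comps :: "nat \<Rightarrow> nat list set" where
  "pseudo_comps n = {\<alpha>. \<alpha> \<noteq> [] \<and> (\<forall>a \<in> set (tl \<alpha>). a > 0) \<and> sum_list \<alpha> = n}"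

definition comp_descents :: "nat list \<Rightarrow> nat set" where
  "comp_descents \<alpha> = {sum_list (take k \<alpha>) | k. 1 \<le> k \<and> k < length \<alpha>}"

definition ribbonB :: "nat list \<Rightarrow> nat" where
  "ribbonB \<alpha> = card {w \<in> signed_perms (sum_list \<alpha>). descents_B (sum_list \<alpha>) w = comp_descents \<alpha>}"

definition cB :: "nat \<Rightarrow> int \<Rightarrow> nat \<Rightarrow> nat" where
  "cB p i n = card {\<alpha> \<in> pseudo_comps n. [int (ribbonB \<alpha>) = i] (mod int p)}"

end

theory Submission
  imports Defs
begin

text \<open>
  Let \<open>\<beta>\<^sub>n(S)\<close> count the signed permutations of \<open>[n]\<close> with descent set \<open>S\<close> and put
  \<open>\<alpha>\<^sub>n(T) = \<Sum>S\<subseteq>T. \<beta>\<^sub>n(S)\<close>. Pseudo-compositions of \<open>n\<close> correspond to subsets of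
  \<open>{0..n-1}\<close> via their descent sets, and \<open>r\<^sup>B\<^sub>\<alpha> = \<beta>\<^sub>n(D(\<alpha>))\<close>. Cutting a signed
  permutation after its last permitted descent \<open>t\<close> leaves an increasing tail, i.e. a set of signed
  values, which gives \<open>\<alpha>\<^sub>n(T \<union> {t}) = (n choose t) 2\<^bsup>n-t\<^esup> \<alpha>\<^sub>t(T)\<close> when \<open>T < t\<close>.

  For \<open>n = m p\<^sup>d\<close>, Lucas' congruence \<open>(a p\<^sup>d choose k) \<equiv> [p\<^sup>d dvd k] (a choose k/p\<^sup>d)\<close> and
  Fermat's \<open>2\<^sup>p \<equiv> 2\<close> turn this recurrence into \<open>\<alpha>\<^sub>n(T) \<equiv> 0 (mod p)\<close> unless every element
  of \<open>T\<close> is a multiple of \<open>p\<^sup>d\<close>, and \<open>\<alpha>\<^sub>n(p\<^sup>d T\<^sub>0) \<equiv> \<alpha>\<^sub>m(T\<^sub>0)\<close>. Inclusion-exclusion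
  then gives \<open>\<beta>\<^sub>n(p\<^sup>d S\<^sub>0 \<union> E) \<equiv> (-1)\<^bsup>|E|\<^esup> \<beta>\<^sub>m(S\<^sub>0)\<close> whenever \<open>E\<close> contains no multiple
  of \<open>p\<^sup>d\<close>. Every \<open>S \<subseteq> {0..n-1}\<close> splits uniquely in this way, there are \<open>n - m\<close>
  non-multiples below \<open>n\<close>, and half of the sets \<open>E\<close> have even size; so each \<open>S\<^sub>0\<close> contributes
  \<open>2\<^bsup>n-m-1\<^esup>\<close> sets to the residue class of \<open>\<beta>\<^sub>m(S\<^sub>0)\<close> and as many to that of
  \<open>-\<beta>\<^sub>m(S\<^sub>0)\<close>.
\<close>

section \<open>Binomial coefficients and powers modulo a prime\<close>

lemma binomial_add_prime_mod:
  fixes p :: nat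
  assumes "prime p"
  shows "[(b + p) choose k = (b choose k) + (if p \<le> k then b choose (k - p) else 0)] (mod p)"
proof -
  have p0: "p > 0"
    using assms prime_gt_0_nat by blast
  have vanish: "p dvd (p choose j)" if "j \<noteq> 0" and "j \<noteq> p" for j
    using that assms dvd_choose_prime[of j p] by (cases "j < p") (auto simp: binomial_eq_0)
  \<comment> \<open>Only the terms \<open>j = 0\<close> and \<open>j = p\<close> of Vandermonde's convolution survive mod \<open>p\<close>.\<close>
  have "[(\<Sum>j\<le>k. (p choose j) * (b choose (k - j))) =
      (\<Sum>j\<le>k. (if j = 0 then b choose k else 0) + (if j = p then b choose (k - p) else 0))] (mod p)"
  proof (rule cong_sum)
    fix j
    show "[(p choose j) * (b choose (k - j)) =
        (if j = 0 then b choose k else 0) + (if j = p then b choose (k - p) else 0)] (mod p)"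
      using vanish[of j] p0 by (cases "j = 0 \<or> j = p") (auto simp: cong_0_iff)
  qed
  then show ?thesis
    using vandermonde[of p b k] by (simp add: sum.distrib add.commute)
qed

lemma binomial_mult_prime_mod:
  fixes p :: nat
  assumes "prime p"
  shows "[(a * p) choose k = (if p dvd k then a choose (k div p) else 0)] (mod p)"
proof (induction a arbitrary: k)
  case 0
  have "p dvd k \<Longrightarrow> k \<noteq> 0 \<Longrightarrow> k div p \<noteq> 0"
    by (auto elim!: dvdE)
  then show ?case
    by (cases "k = 0") (auto simp: binomial_eq_0)
next
  case (Suc a)
  have p0: "p > 0"
    using assms prime_gt_0_nat by blast
  have "[((a * p) choose k) + (if p \<le> k then (a * p) choose (k - p) else 0) =
      (if p dvd k then a choose (k div p) else 0)
      + (if p \<le> k then (if p dvd (k - p) then a choose ((k - p) div p) else 0) else 0)] (mod p)"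
    using Suc.IH[of k] Suc.IH[of "k - p"] by (intro cong_add) auto
  also have "(if p dvd k then a choose (k div p) else 0)
      + (if p \<le> k then (if p dvd (k - p) then a choose ((k - p) div p) else 0) else 0)
      = (if p dvd k then Suc a choose (k div p) else 0)"
  proof (cases "p \<le> k")
    case True
    then have "p dvd (k - p) \<longleftrightarrow> p dvd k" and "k div p = Suc ((k - p) div p)"
      using p0 by (simp_all add: dvd_minus_self le_div_geq)
    then show ?thesis
      by auto
  next
    case False
    then have "p dvd k \<longleftrightarrow> k = 0"
      using p0 by (auto dest: dvd_imp_le)
    then show ?thesis
      using False by auto
  qed
  finally have "[((a * p) choose k) + (if p \<le> k then (a * p) choose (k - p) else 0) =
      (if p dvd k then Suc a choose (k div p) else 0)] (mod p)" .
  moreover have "Suc a * p = a * p + p"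
    by simp
  ultimately show ?case
    using binomial_add_prime_mod[OF assms, of "a * p" k] by (metis cong_trans)
qed

lemma binomial_mult_prime_power_mod:
  fixes p :: nat
  assumes "prime p"
  shows "[(a * p ^ d) choose k = (if p ^ d dvd k then a choose (k div p ^ d) else 0)] (mod p)"
proof (induction d arbitrary: k)
  case (Suc d)
  have p0: "p > 0"
    using assms prime_gt_0_nat by blast
  have "p ^ Suc d dvd k \<longleftrightarrow> p dvd k \<and> p ^ d dvd (k div p)"
    using p0 by (auto elim!: dvdE simp: mult.assoc)
  moreover have "[(a * p ^ Suc d) choose k = (if p dvd k then (a * p ^ d) choose (k div p) else 0)] (mod p)"
    using binomial_mult_prime_mod[OF assms, of "a * p ^ d" k] by (simp add: ac_simps)
  ultimately show ?case
    using Suc.IH[of "k div p"] by (auto simp: div_mult2_eq intro: cong_trans)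
qed simp

lemma power_prime_power_exp_cong:
  fixes p a :: nat
  assumes "prime p" and "\<not> p dvd a"
  shows "[a ^ (p ^ d * x) = a ^ x] (mod p)"
proof (induction d arbitrary: x)
  case (Suc d)
  have "\<not> p dvd a ^ x"
    using assms prime_dvd_power by blast
  then have "[(a ^ x) ^ (p - 1) * a ^ x = 1 * a ^ x] (mod p)"
    using fermat_theorem[OF assms(1)] by (blast intro: cong_scalar_right)
  moreover have "(a ^ x) ^ (p - 1) * a ^ x = a ^ (p * x)"
  proof -
    have "Suc (p - 1) = p"
      using prime_gt_0_nat[OF assms(1)] by simp
    then have "(a ^ x) ^ (p - 1) * a ^ x = (a ^ x) ^ p"
      using power_Suc2[of "a ^ x" "p - 1"] by simp
    also have "\<dots> = a ^ (p * x)"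
      by (simp add: power_mult[symmetric] mult.commute)
    finally show ?thesis .
  qed
  ultimately have "[a ^ (p * x) = a ^ x] (mod p)"
    by simp
  then show ?case
    using Suc.IH[of "p * x"] by (simp add: ac_simps cong_trans)
qed simp

lemma odd_prime_not_dvd_2: "prime (p :: nat) \<Longrightarrow> odd p \<Longrightarrow> \<not> p dvd 2"
  using primes_dvd_imp_eq[of p 2] by auto

section \<open>Signed arrangements and their descent sets\<close>

text \<open>A signed permutation \<open>w\<close> of \<open>[n]\<close> is encoded by its window \<open>[w(1), ..., w(n)]\<close>, a list
  whose absolute values enumerate \<open>{1..n}\<close>; the \<open>0\<close> prepended in \<open>list_descents\<close> is the
  convention \<open>w(0) = 0\<close>. \<open>alphaB\<close> and \<open>betaB\<close> are the type B analogues of Stanley's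
  \<open>\<alpha>\<^sub>n\<close> and \<open>\<beta>\<^sub>n\<close>. They are defined for arbitrary sets \<open>V\<close> of positive values, because
  cutting off an increasing tail leaves an arrangement of an arbitrary smaller value set.\<close>

definition signed_arrangements :: "int set \<Rightarrow> int list set" where
  "signed_arrangements V = {xs. distinct (map abs xs) \<and> set (map abs xs) = V}"

definition list_descents :: "int list \<Rightarrow> nat set" where
  "list_descents xs = {i. i < length xs \<and> (0 # xs) ! i > xs ! i}"

definition alphaB :: "int set \<Rightarrow> nat set \<Rightarrow> nat" where
  "alphaB V T = card {xs \<in> signed_arrangements V. list_descents xs \<subseteq> T}"

definition betaB :: "int set \<Rightarrow> nat set \<Rightarrow> nat" where
  "betaB V S = card {xs \<in> signed_arrangements V. list_descents xs = S}"

definition signed_subsets :: "int set \<Rightarrow> nat \<Rightarrow> int set set" where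
  "signed_subsets V j = {Z. finite Z \<and> inj_on abs Z \<and> abs ` Z \<subseteq> V \<and> card Z = j}"

lemma length_signed_arrangement: "xs \<in> signed_arrangements V \<Longrightarrow> length xs = card V"
  unfolding signed_arrangements_def using distinct_card[of "map abs xs"] by auto

lemma subset_signed_closure: "abs ` A \<subseteq> V \<Longrightarrow> A \<subseteq> V \<union> uminus ` (V :: int set)"
proof
  fix x assume "abs ` A \<subseteq> V" "x \<in> A"
  then have "\<bar>x\<bar> \<in> V"
    by blast
  moreover have "x = \<bar>x\<bar> \<or> x = - \<bar>x\<bar>"
    by linarith
  ultimately show "x \<in> V \<union> uminus ` V"
    by (metis UnI1 UnI2 image_eqI)
qed

lemma finite_signed_arrangements:
  assumes "finite V"
  shows "finite (signed_arrangements V)"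
proof -
  have "set xs \<subseteq> V \<union> uminus ` V \<and> length xs = card V" if "xs \<in> signed_arrangements V" for xs
    using that subset_signed_closure[of "set xs" V] length_signed_arrangement[OF that]
    unfolding signed_arrangements_def by simp
  then have "signed_arrangements V \<subseteq> {xs. set xs \<subseteq> V \<union> uminus ` V \<and> length xs = card V}"
    by blast
  moreover have "finite {xs. set xs \<subseteq> V \<union> uminus ` V \<and> length xs = card V}"
    using assms by (simp add: finite_lists_length_eq)
  ultimately show ?thesis
    by (rule finite_subset)
qed

lemma finite_signed_subsets:
  assumes "finite V"
  shows "finite (signed_subsets V j)"
proof -
  have "Z \<subseteq> V \<union> uminus ` V" if "Z \<in> signed_subsets V j" for Z
    using that subset_signed_closure[of Z V] unfolding signed_subsets_def by simp
  then have "signed_subsets V j \<subseteq> Pow (V \<union> uminus ` V)"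
    by blast
  then show ?thesis
    using assms by (simp add: finite_subset)
qed

lemma append_in_signed_arrangements:
  "ys @ zs \<in> signed_arrangements V \<longleftrightarrow>
    ys \<in> signed_arrangements (V - abs ` set zs) \<and> distinct (map abs zs) \<and> abs ` set zs \<subseteq> V"
  unfolding signed_arrangements_def by auto

lemma list_descents_empty_iff: "list_descents xs = {} \<longleftrightarrow> sorted (0 # xs)"
  unfolding list_descents_def sorted_iff_nth_Suc by (fastforce simp: not_less)

lemma list_descents_append_iff:
  assumes "length ys = t" and "i \<noteq> t"
  shows "i \<in> list_descents (ys @ zs) \<longleftrightarrow>
    i < t \<and> i \<in> list_descents ys \<or> t < i \<and> i < t + length zs \<and> zs ! (i - t - 1) > zs ! (i - t)"
proof (cases "i < t")
  case True
  then show ?thesis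
    using assms unfolding list_descents_def by (cases i) (auto simp: nth_append)
next
  case False
  with assms obtain j where "i = Suc j" "t \<le> j"
    by (cases i) auto
  then show ?thesis
    using assms unfolding list_descents_def by (auto simp: nth_append Suc_diff_le)
qed

text \<open>Cutting an arrangement after position \<open>t\<close>: if no descent lies beyond \<open>t\<close>, the tail is
  increasing, hence determined by its set of entries.\<close>
lemma list_descents_append_subset_iff:
  assumes "length ys = t" and "T \<subseteq> {..<t}"
  shows "list_descents (ys @ zs) \<subseteq> insert t T \<longleftrightarrow> list_descents ys \<subseteq> T \<and> sorted zs"
proof
  assume desc: "list_descents (ys @ zs) \<subseteq> insert t T"
  have "i \<in> T" if "i \<in> list_descents ys" for i
  proof -
    have "i < t"
      using that assms(1) unfolding list_descents_def by auto
    then show ?thesis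
      using that desc list_descents_append_iff[OF assms(1), of i zs] by auto
  qed
  moreover have "zs ! j \<le> zs ! Suc j" if "Suc j < length zs" for j
  proof -
    have "t + Suc j \<notin> insert t T"
      using assms(2) by auto
    then have "t + Suc j \<notin> list_descents (ys @ zs)"
      using desc by blast
    then show ?thesis
      using that list_descents_append_iff[OF assms(1), of "t + Suc j" zs] by simp
  qed
  ultimately show "list_descents ys \<subseteq> T \<and> sorted zs"
    by (auto simp: sorted_iff_nth_Suc)
next
  assume asm: "list_descents ys \<subseteq> T \<and> sorted zs"
  show "list_descents (ys @ zs) \<subseteq> insert t T"
  proof
    fix i assume i: "i \<in> list_descents (ys @ zs)"
    show "i \<in> insert t T"
    proof (cases "i = t")
      case False
      have "\<not> zs ! (i - t - 1) > zs ! (i - t)" if "t < i" "i < t + length zs"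
      proof -
        have "i - t < length zs"
          using that by linarith
        then show ?thesis
          using asm sorted_nth_mono[of zs "i - t - 1" "i - t"] by (simp add: not_less)
      qed
      moreover have "i \<notin> list_descents ys \<or> i \<in> T"
        using asm by blast
      ultimately show ?thesis
        using i list_descents_append_iff[OF assms(1) False] by blast
    qed simp
  qed
qed

lemma sorted_list_of_set_set: "sorted zs \<Longrightarrow> distinct zs \<Longrightarrow> sorted_list_of_set (set zs) = zs"
  by (simp add: sorted_list_of_set_sort_remdups distinct_remdups_id sorted_sort_id)

lemma arrangements_descents_insert_max:
  assumes "finite V" and "t \<le> card V" and "T \<subseteq> {..<t}"
  shows "{xs \<in> signed_arrangements V. list_descents xs \<subseteq> insert t T} =
    (\<Union>Z \<in> signed_subsets V (card V - t). (\<lambda>ys. ys @ sorted_list_of_set Z) `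
       {ys \<in> signed_arrangements (V - abs ` Z). list_descents ys \<subseteq> T})"
proof (intro equalityI subsetI)
  fix xs assume "xs \<in> {xs \<in> signed_arrangements V. list_descents xs \<subseteq> insert t T}"
  then have xs: "xs \<in> signed_arrangements V" and desc: "list_descents xs \<subseteq> insert t T"
    by auto
  define ys zs where "ys = take t xs" and "zs = drop t xs"
  have split: "xs = ys @ zs" and len: "length ys = t"
    using assms(2) length_signed_arrangement[OF xs] by (simp_all add: ys_def zs_def)
  have ys: "list_descents ys \<subseteq> T" and "sorted zs"
    using desc list_descents_append_subset_iff[OF len assms(3)] split by auto
  have "ys \<in> signed_arrangements (V - abs ` set zs)" and "distinct (map abs zs)" and "abs ` set zs \<subseteq> V"
    using xs append_in_signed_arrangements[of ys zs V] split by auto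
  moreover have "card (set zs) = card V - t"
    using \<open>distinct (map abs zs)\<close> length_signed_arrangement[OF xs]
    by (simp add: zs_def distinct_card distinct_map)
  moreover have "xs = ys @ sorted_list_of_set (set zs)"
    using split \<open>sorted zs\<close> \<open>distinct (map abs zs)\<close>
    by (simp add: sorted_list_of_set_set distinct_map)
  ultimately show "xs \<in> (\<Union>Z \<in> signed_subsets V (card V - t). (\<lambda>ys. ys @ sorted_list_of_set Z) `
       {ys \<in> signed_arrangements (V - abs ` Z). list_descents ys \<subseteq> T})"
    using ys by (auto simp: signed_subsets_def distinct_map)
next
  fix xs assume "xs \<in> (\<Union>Z \<in> signed_subsets V (card V - t). (\<lambda>ys. ys @ sorted_list_of_set Z) `
       {ys \<in> signed_arrangements (V - abs ` Z). list_descents ys \<subseteq> T})"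
  then obtain Z ys where Z: "Z \<in> signed_subsets V (card V - t)"
    and ys: "ys \<in> signed_arrangements (V - abs ` Z)" and desc: "list_descents ys \<subseteq> T"
    and xs: "xs = ys @ sorted_list_of_set Z"
    by blast
  have fin: "finite Z" and inj: "inj_on abs Z" and sub: "abs ` Z \<subseteq> V" and card: "card Z = card V - t"
    using Z unfolding signed_subsets_def by auto
  have "length ys = card V - card (abs ` Z)"
    using length_signed_arrangement[OF ys] card_Diff_subset[OF finite_imageI[OF fin] sub] by simp
  then have len: "length ys = t"
    using card card_image[OF inj] assms(2) by simp
  have "distinct (map abs (sorted_list_of_set Z))"
    using fin inj by (simp add: distinct_map)
  then show "xs \<in> {xs \<in> signed_arrangements V. list_descents xs \<subseteq> insert t T}"
    using xs ys desc fin sub append_in_signed_arrangements list_descents_append_subset_iff[OF len assms(3)]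
    by simp
qed

lemma alphaB_insert_max:
  assumes "finite V" and "t \<le> card V" and "T \<subseteq> {..<t}"
  shows "alphaB V (insert t T) = (\<Sum>Z \<in> signed_subsets V (card V - t). alphaB (V - abs ` Z) T)"
proof -
  let ?append = "\<lambda>Z ys. ys @ sorted_list_of_set Z"
  let ?A = "\<lambda>Z. {ys \<in> signed_arrangements (V - abs ` Z). list_descents ys \<subseteq> T}"
  have disjoint: "?append Z1 ` ?A Z1 \<inter> ?append Z2 ` ?A Z2 = {}"
    if "Z1 \<in> signed_subsets V (card V - t)" "Z2 \<in> signed_subsets V (card V - t)" "Z1 \<noteq> Z2" for Z1 Z2
  proof -
    have "finite Z1" "finite Z2" "card Z1 = card Z2"
      using that unfolding signed_subsets_def by auto
    then have "sorted_list_of_set Z1 \<noteq> sorted_list_of_set Z2 \<and>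
        length (sorted_list_of_set Z1) = length (sorted_list_of_set Z2)"
      using that(3) sorted_list_of_set_inject by auto
    then show ?thesis
      by auto
  qed
  have "alphaB V (insert t T) = card (\<Union>Z \<in> signed_subsets V (card V - t). ?append Z ` ?A Z)"
    unfolding alphaB_def arrangements_descents_insert_max[OF assms] ..
  also have "\<dots> = (\<Sum>Z \<in> signed_subsets V (card V - t). card (?append Z ` ?A Z))"
    using assms(1) disjoint
    by (intro card_UN_disjoint) (auto simp: finite_signed_subsets finite_signed_arrangements)
  also have "\<dots> = (\<Sum>Z \<in> signed_subsets V (card V - t). alphaB (V - abs ` Z) T)"
    unfolding alphaB_def by (intro sum.cong refl card_image inj_onI) simp
  finally show ?thesis .
qed

lemma signing_positive_part:
  fixes Z :: "int set"
  assumes "inj_on abs Z" and "abs ` Z = U"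
  shows "Z \<inter> U \<union> uminus ` (U - Z \<inter> U) = Z"
proof (intro equalityI subsetI)
  fix z assume z: "z \<in> Z \<inter> U \<union> uminus ` (U - Z \<inter> U)"
  show "z \<in> Z"
  proof (rule ccontr)
    assume "z \<notin> Z"
    then obtain u where u: "u \<in> U" "u \<notin> Z" "z = - u"
      using z by auto
    then obtain y where "y \<in> Z" "\<bar>y\<bar> = u"
      using assms(2) by auto
    moreover have "y = u \<or> y = - u"
      using \<open>\<bar>y\<bar> = u\<close> by linarith
    ultimately show False
      using u \<open>z \<notin> Z\<close> by auto
  qed
next
  fix z assume z: "z \<in> Z"
  show "z \<in> Z \<inter> U \<union> uminus ` (U - Z \<inter> U)"
  proof (cases "z \<ge> 0")
    case True
    then show ?thesis
      using assms(2) z by force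
  next
    case False
    have "\<bar>z\<bar> \<notin> Z"
      using assms(1) z False inj_onD[of abs Z "\<bar>z\<bar>" z] by auto
    moreover have "\<bar>z\<bar> \<in> U"
      using assms(2) z by auto
    ultimately show ?thesis
      using False by (auto intro: image_eqI[of z uminus "\<bar>z\<bar>"])
  qed
qed

lemma signing_of_positive_part:
  fixes U :: "int set"
  assumes "U \<subseteq> {0<..}" and "N \<subseteq> U"
  shows "inj_on abs (N \<union> uminus ` (U - N))" and "abs ` (N \<union> uminus ` (U - N)) = U"
    and "(N \<union> uminus ` (U - N)) \<inter> U = N"
proof -
  have abs_pos: "\<bar>u\<bar> = u" "\<bar>- u\<bar> = u" if "u \<in> U" for u
    using that assms(1) by auto
  have "inj_on abs N"
    using assms(2) abs_pos(1) by (intro inj_onI) (metis subsetD)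
  moreover have "inj_on abs (uminus ` (U - N))"
    using abs_pos by (auto simp: inj_on_def)
  moreover have "abs ` N = N" "abs ` uminus ` (U - N) = U - N"
    using assms(2) abs_pos by (force simp: image_image)+
  ultimately show "inj_on abs (N \<union> uminus ` (U - N))" and "abs ` (N \<union> uminus ` (U - N)) = U"
    using assms(2) by (auto simp: inj_on_Un image_Un)
  have "uminus ` U \<inter> U = {}"
  proof (intro equals0I)
    fix x assume "x \<in> uminus ` U \<inter> U"
    then have "x > 0" "- x > 0"
      using assms(1) by auto
    then show False
      by simp
  qed
  then show "(N \<union> uminus ` (U - N)) \<inter> U = N"
    using assms(2) by blast
qed

text \<open>A set of signed values with absolute values \<open>U\<close> is fixed by its positive part.\<close>
lemma card_signings:
  fixes U :: "int set"
  assumes "finite U" and "U \<subseteq> {0<..}"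
  shows "card {Z. inj_on abs Z \<and> abs ` Z = U} = 2 ^ card U"
proof -
  have "bij_betw (\<lambda>N. N \<union> uminus ` (U - N)) (Pow U) {Z. inj_on abs Z \<and> abs ` Z = U}"
  proof (rule bij_betw_byWitness[where f' = "\<lambda>Z. Z \<inter> U"])
    show "\<forall>N \<in> Pow U. (N \<union> uminus ` (U - N)) \<inter> U = N"
      using signing_of_positive_part(3)[OF assms(2)] by blast
    show "\<forall>Z \<in> {Z. inj_on abs Z \<and> abs ` Z = U}. Z \<inter> U \<union> uminus ` (U - Z \<inter> U) = Z"
      using signing_positive_part by blast
    show "(\<lambda>N. N \<union> uminus ` (U - N)) ` Pow U \<subseteq> {Z. inj_on abs Z \<and> abs ` Z = U}"
      using signing_of_positive_part(1,2)[OF assms(2)] by blast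
  qed blast
  then show ?thesis
    using assms(1) by (simp add: bij_betw_same_card[symmetric] card_Pow)
qed

lemma card_signed_subsets:
  assumes "finite V" and "V \<subseteq> {0<..}"
  shows "card (signed_subsets V j) = (card V choose j) * 2 ^ j"
proof -
  let ?signings = "\<lambda>U. {Z. inj_on abs Z \<and> abs ` Z = U}"
  have card_signings_j: "card (?signings U) = 2 ^ j" if "U \<in> {U. U \<subseteq> V \<and> card U = j}" for U
    using that assms card_signings[of U] finite_subset by auto
  have partition: "signed_subsets V j = (\<Union>U \<in> {U. U \<subseteq> V \<and> card U = j}. ?signings U)"
  proof (intro equalityI subsetI)
    fix Z assume "Z \<in> signed_subsets V j"
    then show "Z \<in> (\<Union>U \<in> {U. U \<subseteq> V \<and> card U = j}. ?signings U)"
      unfolding signed_subsets_def by (auto simp: card_image)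
  next
    fix Z assume "Z \<in> (\<Union>U \<in> {U. U \<subseteq> V \<and> card U = j}. ?signings U)"
    then have "inj_on abs Z" "abs ` Z \<subseteq> V" "card (abs ` Z) = j"
      by auto
    moreover have "finite Z"
      using calculation assms(1) finite_subset finite_imageD by blast
    ultimately show "Z \<in> signed_subsets V j"
      unfolding signed_subsets_def by (simp add: card_image)
  qed
  have "card (signed_subsets V j) = (\<Sum>U \<in> {U. U \<subseteq> V \<and> card U = j}. card (?signings U))"
    unfolding partition
  proof (rule card_UN_disjoint)
    show "finite {U. U \<subseteq> V \<and> card U = j}"
      using assms(1) by simp
    show "\<forall>U \<in> {U. U \<subseteq> V \<and> card U = j}. finite (?signings U)"
      using card_signings_j by (auto intro: card_ge_0_finite)
  qed auto
  also have "\<dots> = (card V choose j) * 2 ^ j"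
    using card_signings_j n_subsets[OF assms(1)] by simp
  finally show ?thesis .
qed

lemma alphaB_empty:
  assumes "finite V" and "V \<subseteq> {0<..}"
  shows "alphaB V {} = 1"
proof -
  have "xs \<in> signed_arrangements V \<and> sorted (0 # xs) \<longleftrightarrow> xs = sorted_list_of_set V" for xs
  proof
    assume xs: "xs \<in> signed_arrangements V \<and> sorted (0 # xs)"
    then have "sorted xs" and "map abs xs = xs"
      by (auto intro: map_idI)
    moreover have "distinct (map abs xs)" and "set (map abs xs) = V"
      using xs unfolding signed_arrangements_def by auto
    ultimately show "xs = sorted_list_of_set V"
      using sorted_list_of_set_set[of xs] by simp
  next
    assume xs: "xs = sorted_list_of_set V"
    have pos: "\<forall>x \<in> set xs. 0 < x"
      using xs assms by auto
    then have "map abs xs = xs"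
      by (intro map_idI) auto
    then show "xs \<in> signed_arrangements V \<and> sorted (0 # xs)"
      using pos xs assms(1) unfolding signed_arrangements_def by (simp add: less_imp_le)
  qed
  then have "{xs \<in> signed_arrangements V. list_descents xs \<subseteq> {}} = {sorted_list_of_set V}"
    unfolding subset_empty list_descents_empty_iff by blast
  then show ?thesis
    unfolding alphaB_def by simp
qed

lemma alphaB_interval_empty: "alphaB {1..int n} {} = 1"
  by (rule alphaB_empty) auto

lemma alphaB_insert_max_uniform:
  assumes "finite V" and "V \<subseteq> {0<..}" and "t < card V" and "T \<subseteq> {..<t}"
    and "\<And>W. W \<subseteq> V \<Longrightarrow> card W = t \<Longrightarrow> alphaB W T = c"
  shows "alphaB V (insert t T) = (card V choose t) * 2 ^ (card V - t) * c"
proof -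
  have "alphaB (V - abs ` Z) T = c" if "Z \<in> signed_subsets V (card V - t)" for Z
  proof (rule assms(5))
    have "finite Z" "abs ` Z \<subseteq> V" "card (abs ` Z) = card V - t"
      using that unfolding signed_subsets_def by (auto simp: card_image)
    then show "card (V - abs ` Z) = t"
      using assms(3) by (simp add: card_Diff_subset)
  qed blast
  then have "alphaB V (insert t T) = card (signed_subsets V (card V - t)) * c"
    using alphaB_insert_max[OF assms(1) less_imp_le[OF assms(3)] assms(4)] by simp
  then show ?thesis
    using assms(1-3) by (simp add: card_signed_subsets binomial_symmetric[of t "card V"])
qed

lemma alphaB_eq_alphaB_interval:
  assumes "finite V" and "V \<subseteq> {0<..}" and "T \<subseteq> {..<card V}"
  shows "alphaB V T = alphaB {1..int (card V)} T"
  using finite_subset[OF assms(3) finite_lessThan] assms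
proof (induction T arbitrary: V rule: finite_linorder_max_induct)
  case empty
  then show ?case
    by (simp add: alphaB_empty alphaB_interval_empty)
next
  case (insert t T)
  have T_lt: "T \<subseteq> {..<t}"
    using insert.hyps(2) by auto
  have step: "alphaB W (insert t T) = (card W choose t) * 2 ^ (card W - t) * alphaB {1..int t} T"
    if "finite W" and "W \<subseteq> {0<..}" and "t < card W" for W
  proof (rule alphaB_insert_max_uniform[OF that T_lt])
    fix U assume "U \<subseteq> W" and "card U = t"
    have "finite U"
      using \<open>U \<subseteq> W\<close> \<open>finite W\<close> by (rule finite_subset)
    moreover have "U \<subseteq> {0<..}"
      using \<open>U \<subseteq> W\<close> \<open>W \<subseteq> {0<..}\<close> by (rule order_trans)
    ultimately show "alphaB U T = alphaB {1..int t} T"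
      using insert.IH[of U] T_lt \<open>card U = t\<close> by simp
  qed
  have "{1..int (card V)} \<subseteq> {0<..}"
    by auto
  then show ?case
    using step[of V] step[of "{1..int (card V)}"] insert.prems by simp
qed

lemma alphaB_interval_insert_max:
  assumes "t < n" and "T \<subseteq> {..<t}"
  shows "alphaB {1..int n} (insert t T) = (n choose t) * 2 ^ (n - t) * alphaB {1..int t} T"
proof -
  have uniform: "alphaB W T = alphaB {1..int t} T" if "W \<subseteq> {1..int n}" and "card W = t" for W
  proof -
    have "finite W"
      using that(1) by (rule finite_subset) simp
    moreover have "W \<subseteq> {0<..}"
      using that(1) by auto
    ultimately show ?thesis
      using alphaB_eq_alphaB_interval[of W T] that(2) assms(2) by simp
  qed
  have "{1..int n} \<subseteq> {0<..}" and "t < card {1..int n}"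
    using assms(1) by auto
  from alphaB_insert_max_uniform[OF finite_atLeastAtMost_int this assms(2) uniform]
  show ?thesis
    by simp
qed

section \<open>Descent counts modulo \<open>p\<close>\<close>

lemma alphaB_interval_cong_0:
  assumes "prime p" and "T \<subseteq> {..<a * p ^ d}" and "\<exists>t \<in> T. \<not> p ^ d dvd t"
  shows "[alphaB {1..int (a * p ^ d)} T = 0] (mod p)"
  using finite_subset[OF assms(2) finite_lessThan] assms(2,3)
proof (induction T arbitrary: a rule: finite_linorder_max_induct)
  case (insert t T)
  have T_lt: "T \<subseteq> {..<t}"
    using insert.hyps(2) by auto
  have recurrence: "alphaB {1..int (a * p ^ d)} (insert t T) =
      ((a * p ^ d) choose t) * 2 ^ (a * p ^ d - t) * alphaB {1..int t} T"
    using insert.prems(1) T_lt by (intro alphaB_interval_insert_max) auto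
  show ?case
  proof (cases "p ^ d dvd t")
    case False
    then have "[(a * p ^ d) choose t = 0] (mod p)"
      using binomial_mult_prime_power_mod[OF assms(1), of a d t] by simp
    then show ?thesis
      unfolding recurrence cong_0_iff by simp
  next
    case True
    then obtain b where t: "t = b * p ^ d"
      by (metis dvdE mult.commute)
    have "\<exists>s \<in> T. \<not> p ^ d dvd s"
      using insert.prems(2) True by auto
    then have "[alphaB {1..int t} T = 0] (mod p)"
      using insert.IH[of b] T_lt t by auto
    then show ?thesis
      unfolding recurrence cong_0_iff by simp
  qed
qed simp

lemma alphaB_interval_scale_cong:
  assumes "prime p" and "odd p" and "T \<subseteq> {..<a}"
  shows "[alphaB {1..int (a * p ^ d)} ((*) (p ^ d) ` T) = alphaB {1..int a} T] (mod p)"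
  using finite_subset[OF assms(3) finite_lessThan] assms(3)
proof (induction T arbitrary: a rule: finite_linorder_max_induct)
  case empty
  show ?case
    using alphaB_interval_empty[of "a * p ^ d"] alphaB_interval_empty[of a] by simp
next
  case (insert t T)
  let ?q = "p ^ d"
  have q: "?q > 0"
    using prime_gt_0_nat[OF assms(1)] by simp
  have T_lt: "T \<subseteq> {..<t}" and "t < a"
    using insert by auto
  have "?q * t < a * ?q" and "(*) ?q ` T \<subseteq> {..<?q * t}"
    using \<open>t < a\<close> T_lt q by (auto simp: mult.commute)
  from alphaB_interval_insert_max[OF this]
  have "alphaB {1..int (a * ?q)} ((*) ?q ` insert t T) =
      ((a * ?q) choose (?q * t)) * 2 ^ (a * ?q - ?q * t) * alphaB {1..int (?q * t)} ((*) ?q ` T)"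
    by simp
  also have "[\<dots> = (a choose t) * 2 ^ (a - t) * alphaB {1..int t} T] (mod p)"
  proof (intro cong_mult)
    show "[(a * ?q) choose (?q * t) = a choose t] (mod p)"
      using binomial_mult_prime_power_mod[OF assms(1), of a d "?q * t"] prime_gt_0_nat[OF assms(1)]
      by simp
    have "a * ?q - ?q * t = ?q * (a - t)"
      by (metis diff_mult_distrib mult.commute)
    then show "[2 ^ (a * ?q - ?q * t) = 2 ^ (a - t)] (mod p)"
      using power_prime_power_exp_cong[OF assms(1) odd_prime_not_dvd_2[OF assms(1,2)]] by simp
    show "[alphaB {1..int (?q * t)} ((*) ?q ` T) = alphaB {1..int t} T] (mod p)"
      using insert.IH[OF T_lt] by (simp add: mult.commute)
  qed
  also have "(a choose t) * 2 ^ (a - t) * alphaB {1..int t} T = alphaB {1..int a} (insert t T)"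
    using alphaB_interval_insert_max[OF \<open>t < a\<close> T_lt] by simp
  finally show ?case .
qed

lemma alphaB_eq_sum_betaB:
  assumes "finite V" and "finite T"
  shows "alphaB V T = (\<Sum>S \<in> Pow T. betaB V S)"
proof -
  have "{xs \<in> signed_arrangements V. list_descents xs \<subseteq> T} =
      (\<Union>S \<in> Pow T. {xs \<in> signed_arrangements V. list_descents xs = S})"
    by auto
  moreover have "card (\<Union>S \<in> Pow T. {xs \<in> signed_arrangements V. list_descents xs = S}) =
      (\<Sum>S \<in> Pow T. card {xs \<in> signed_arrangements V. list_descents xs = S})"
    using assms by (intro card_UN_disjoint) (auto simp: finite_signed_arrangements)
  ultimately show ?thesis
    unfolding alphaB_def betaB_def by simp
qed

lemma betaB_inclusion_exclusion:
  assumes "finite V" and "finite S"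
  shows "int (betaB V S) = (\<Sum>T \<in> Pow S. (-1) ^ (card S - card T) * int (alphaB V T))"
  by (rule inclusion_exclusion_mobius) (simp_all add: alphaB_eq_sum_betaB assms)

lemma sum_Pow_image_Un:
  fixes h :: "'b set \<Rightarrow> 'c :: comm_monoid_add"
  assumes "inj_on f A" and "finite A" and "finite E" and "f ` A \<inter> E = {}"
  shows "(\<Sum>T \<in> Pow (f ` A \<union> E). h T) =
    (\<Sum>T \<in> Pow A. h (f ` T)) + (\<Sum>T \<in> {T \<in> Pow (f ` A \<union> E). T \<inter> E \<noteq> {}}. h T)"
proof -
  define M where "M = {T \<in> Pow (f ` A \<union> E). T \<inter> E \<noteq> {}}"
  have Pow_split: "Pow (f ` A \<union> E) = image f ` Pow A \<union> M"
  proof (intro equalityI subsetI)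
    fix T assume T: "T \<in> Pow (f ` A \<union> E)"
    show "T \<in> image f ` Pow A \<union> M"
    proof (cases "T \<inter> E = {}")
      case True
      then have "T \<subseteq> f ` A"
        using T by auto
      then obtain T0 where "T0 \<subseteq> A" and "T = f ` T0"
        by (auto simp: subset_image_iff)
      then show ?thesis
        by blast
    qed (use T in \<open>auto simp: M_def\<close>)
  qed (unfold M_def, blast)
  have "finite M"
    using assms(2,3) unfolding M_def by simp
  moreover have "image f ` Pow A \<inter> M = {}"
    using assms(4) unfolding M_def by blast
  ultimately have "(\<Sum>T \<in> Pow (f ` A \<union> E). h T) = (\<Sum>T \<in> image f ` Pow A. h T) + (\<Sum>T \<in> M. h T)"
    unfolding Pow_split using assms(2) by (intro sum.union_disjoint) simp_all
  also have "(\<Sum>T \<in> image f ` Pow A. h T) = (\<Sum>T \<in> Pow A. h (f ` T))"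
    using inj_on_image_Pow[OF assms(1)] by (rule sum.reindex_cong) auto
  finally show ?thesis
    unfolding M_def .
qed

lemma sum_alphaB_interval_meeting_cong_0:
  assumes "prime p" and "S \<subseteq> {..<a * p ^ d}" and "E \<subseteq> {x. \<not> p ^ d dvd x}"
  shows "[(\<Sum>T \<in> {T \<in> Pow S. T \<inter> E \<noteq> {}}. c T * int (alphaB {1..int (a * p ^ d)} T)) = 0] (mod int p)"
proof -
  have "[(\<Sum>T \<in> {T \<in> Pow S. T \<inter> E \<noteq> {}}. c T * int (alphaB {1..int (a * p ^ d)} T)) =
      (\<Sum>T \<in> {T \<in> Pow S. T \<inter> E \<noteq> {}}. c T * int 0)] (mod int p)"
  proof (rule cong_sum)
    fix T assume "T \<in> {T \<in> Pow S. T \<inter> E \<noteq> {}}"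
    then have "[alphaB {1..int (a * p ^ d)} T = 0] (mod p)"
      using assms(2,3) by (intro alphaB_interval_cong_0[OF assms(1)]) auto
    then show "[c T * int (alphaB {1..int (a * p ^ d)} T) = c T * int 0] (mod int p)"
      by (intro cong_scalar_left) (simp only: cong_int_iff)
  qed
  then show ?thesis
    by simp
qed

text \<open>Inclusion-exclusion over \<open>T \<subseteq> p\<^sup>d S\<^sub>0 \<union> E\<close>: modulo \<open>p\<close> only the terms with
  \<open>T \<subseteq> p\<^sup>d S\<^sub>0\<close> survive, and they reproduce the expansion of \<open>\<beta>\<^sub>m(S\<^sub>0)\<close>.\<close>
lemma betaB_interval_cong:
  assumes "prime p" and "odd p" and "S0 \<subseteq> {..<m}" and "E \<subseteq> {x. x < m * p ^ d \<and> \<not> p ^ d dvd x}"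
  shows "[int (betaB {1..int (m * p ^ d)} ((*) (p ^ d) ` S0 \<union> E)) =
      (-1) ^ card E * int (betaB {1..int m} S0)] (mod int p)"
proof -
  let ?q = "p ^ d" and ?n = "m * p ^ d"
  define S where "S = (*) ?q ` S0 \<union> E"
  define g where "g T = (-1) ^ (card S - card T) * int (alphaB {1..int ?n} T)" for T
  have q: "?q > 0"
    using prime_gt_0_nat[OF assms(1)] by simp
  then have inj: "inj_on ((*) ?q) S0"
    by (auto intro: inj_onI)
  have fin: "finite S0" "finite E"
    using assms(3,4) by (auto intro: finite_subset)
  have disjoint: "(*) ?q ` S0 \<inter> E = {}"
    using assms(4) by auto
  have card_S: "card S = card S0 + card E"
    unfolding S_def using fin disjoint inj by (simp add: card_Un_disjoint card_image)
  have "int (betaB {1..int ?n} S) = (\<Sum>T \<in> Pow S. g T)"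
    unfolding g_def using fin by (simp add: betaB_inclusion_exclusion S_def)
  also have "\<dots> = (\<Sum>T0 \<in> Pow S0. g ((*) ?q ` T0)) + (\<Sum>T \<in> {T \<in> Pow S. T \<inter> E \<noteq> {}}. g T)"
    unfolding S_def by (rule sum_Pow_image_Un[OF inj fin disjoint])
  finally have expansion: "int (betaB {1..int ?n} S) =
      (\<Sum>T0 \<in> Pow S0. g ((*) ?q ` T0)) + (\<Sum>T \<in> {T \<in> Pow S. T \<inter> E \<noteq> {}}. g T)" .
  have "S \<subseteq> {..<?n}"
    unfolding S_def using assms(3,4) q by (auto simp: mult.commute)
  then have vanishing: "[(\<Sum>T \<in> {T \<in> Pow S. T \<inter> E \<noteq> {}}. g T) = 0] (mod int p)"
    unfolding g_def using assms(4) by (intro sum_alphaB_interval_meeting_cong_0[OF assms(1)]) auto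
  have "[(\<Sum>T0 \<in> Pow S0. g ((*) ?q ` T0)) =
      (\<Sum>T0 \<in> Pow S0. (-1) ^ card E * ((-1) ^ (card S0 - card T0) * int (alphaB {1..int m} T0)))] (mod int p)"
  proof (rule cong_sum)
    fix T0 assume T0: "T0 \<in> Pow S0"
    have "card S - card ((*) ?q ` T0) = card E + (card S0 - card T0)"
      using T0 fin card_S card_mono[of S0 T0] inj_on_subset[OF inj] by (simp add: card_image)
    moreover have "[alphaB {1..int ?n} ((*) ?q ` T0) = alphaB {1..int m} T0] (mod p)"
      using T0 assms(3) by (intro alphaB_interval_scale_cong[OF assms(1,2)]) auto
    ultimately show "[g ((*) ?q ` T0) = (-1) ^ card E * ((-1) ^ (card S0 - card T0) * int (alphaB {1..int m} T0))] (mod int p)"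
      unfolding g_def by (simp add: power_add cong_int_iff[symmetric] cong_scalar_left mult.assoc)
  qed
  also have "(\<Sum>T0 \<in> Pow S0. (-1) ^ card E * ((-1) ^ (card S0 - card T0) * int (alphaB {1..int m} T0)))
      = (-1) ^ card E * int (betaB {1..int m} S0)"
    using fin by (simp add: betaB_inclusion_exclusion sum_distrib_left)
  finally have "[int (betaB {1..int ?n} S) = (-1) ^ card E * int (betaB {1..int m} S0) + 0] (mod int p)"
    unfolding expansion using vanishing by (rule cong_add)
  then show ?thesis
    unfolding S_def by simp
qed

section \<open>Signed permutations and pseudo-compositions\<close>

definition window :: "nat \<Rightarrow> (int \<Rightarrow> int) \<Rightarrow> int list" where
  "window n w = map (\<lambda>i. w (int i)) [1..<Suc n]"

definition perm_of_window :: "nat \<Rightarrow> int list \<Rightarrow> int \<Rightarrow> int" where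
  "perm_of_window n xs i =
    (if i \<in> {- int n..int n} - {0} then sgn i * xs ! (nat \<bar>i\<bar> - 1) else i)"

lemma length_window [simp]: "length (window n w) = n"
  by (simp add: window_def)

lemma nth_window: "k < n \<Longrightarrow> window n w ! k = w (int k + 1)"
  unfolding window_def by (simp del: upt_Suc add: add.commute)

lemma signed_perms_outside: "w \<in> signed_perms n \<Longrightarrow> i \<notin> {- int n..int n} - {0} \<Longrightarrow> w i = i"
  by (simp add: signed_perms_def)

lemma signed_perms_odd: "w \<in> signed_perms n \<Longrightarrow> w (- i) = - w i"
  by (simp add: signed_perms_def)

lemma signed_perms_bij: "w \<in> signed_perms n \<Longrightarrow> bij_betw w ({- int n..int n} - {0}) ({- int n..int n} - {0})"
  by (simp add: signed_perms_def)

lemma descents_B_eq_list_descents: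
  assumes "w \<in> signed_perms n"
  shows "descents_B n w = list_descents (window n w)"
proof -
  have "(0 # window n w) ! i = w (int i)" if "i < n" for i
    using that signed_perms_outside[OF assms, of 0] nth_window[of "i - 1" n w]
    by (cases i) (auto simp: add.commute)
  then show ?thesis
    unfolding descents_B_def list_descents_def by (auto simp: nth_window)
qed

lemma window_in_signed_arrangements:
  assumes "w \<in> signed_perms n"
  shows "window n w \<in> signed_arrangements {1..int n}"
proof -
  let ?N = "{- int n..int n} - {0}"
  have inj: "inj_on w ?N" and into: "w i \<in> ?N" if "i \<in> ?N" for i
    using signed_perms_bij[OF assms] that by (auto simp: bij_betw_def)
  have map_abs: "map abs (window n w) = map (\<lambda>i. \<bar>w (int i)\<bar>) [1..<Suc n]"
    by (simp add: window_def del: upt_Suc)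
  have inj_abs: "inj_on (\<lambda>i. \<bar>w (int i)\<bar>) {1..<Suc n}"
  proof (rule inj_onI)
    fix a b assume a: "a \<in> {1..<Suc n}" and b: "b \<in> {1..<Suc n}"
      and eq: "\<bar>w (int a)\<bar> = \<bar>w (int b)\<bar>"
    then have "w (int a) = w (int b) \<or> w (int a) = w (- int b)"
      using signed_perms_odd[OF assms] by (auto simp: abs_eq_iff)
    then have "int a = int b \<or> int a = - int b"
      using a b inj_onD[OF inj] by fastforce
    then show "a = b"
      using a b by auto
  qed
  have "(\<lambda>i. \<bar>w (int i)\<bar>) ` {1..<Suc n} \<subseteq> {1..int n}"
  proof (rule image_subsetI)
    fix i assume "i \<in> {1..<Suc n}"
    then have "w (int i) \<in> ?N"
      by (intro into) auto
    then show "\<bar>w (int i)\<bar> \<in> {1..int n}"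
      by auto
  qed
  moreover have "card ((\<lambda>i. \<bar>w (int i)\<bar>) ` {1..<Suc n}) = card {1..int n}"
    using card_image[OF inj_abs] by simp
  ultimately have "set (map abs (window n w)) = {1..int n}"
    unfolding map_abs by (simp del: upt_Suc add: card_subset_eq)
  moreover have "distinct (map abs (window n w))"
    unfolding map_abs using inj_abs by (simp del: upt_Suc add: distinct_map)
  ultimately show ?thesis
    unfolding signed_arrangements_def by blast
qed

lemma perm_of_window_window:
  assumes "w \<in> signed_perms n"
  shows "perm_of_window n (window n w) = w"
proof
  fix i
  show "perm_of_window n (window n w) i = w i"
  proof (cases "i \<in> {- int n..int n} - {0}")
    case True
    then have "window n w ! (nat \<bar>i\<bar> - 1) = w \<bar>i\<bar>"
      by (auto simp: nth_window)
    then show ?thesis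
      using True signed_perms_odd[OF assms, of i]
      by (auto simp: perm_of_window_def sgn_if abs_if)
  next
    case False
    then show ?thesis
      unfolding perm_of_window_def if_not_P[OF False] by (simp add: signed_perms_outside[OF assms])
  qed
qed

lemma window_perm_of_window:
  assumes "length xs = n"
  shows "window n (perm_of_window n xs) = xs"
  using assms by (intro nth_equalityI) (auto simp: nth_window perm_of_window_def nat_add_distrib)

lemma perm_of_window_odd: "perm_of_window n xs (- i) = - perm_of_window n xs i"
  by (simp add: perm_of_window_def)

lemma abs_perm_of_window:
  assumes "i \<in> {- int n..int n} - {0}"
  shows "\<bar>perm_of_window n xs i\<bar> = \<bar>xs ! (nat \<bar>i\<bar> - 1)\<bar>"
proof -
  have "\<bar>sgn i\<bar> = 1"
    using assms by (simp add: abs_sgn_eq)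
  then show ?thesis
    unfolding perm_of_window_def if_P[OF assms] abs_mult by simp
qed

lemma perm_of_window_in_range:
  assumes xs: "xs \<in> signed_arrangements {1..int n}" and i: "i \<in> {- int n..int n} - {0}"
  shows "perm_of_window n xs i \<in> {- int n..int n} - {0}"
proof -
  have "xs ! (nat \<bar>i\<bar> - 1) \<in> set xs"
    using i length_signed_arrangement[OF xs] by (intro nth_mem) auto
  then have "\<bar>xs ! (nat \<bar>i\<bar> - 1)\<bar> \<in> {1..int n}"
    using xs unfolding signed_arrangements_def by auto
  then have "\<bar>perm_of_window n xs i\<bar> \<in> {1..int n}"
    using abs_perm_of_window[OF i, of xs] by simp
  then show ?thesis
    by auto
qed

lemma inj_on_perm_of_window:
  assumes xs: "xs \<in> signed_arrangements {1..int n}"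
  shows "inj_on (perm_of_window n xs) ({- int n..int n} - {0})"
proof (rule inj_onI)
  fix i j assume i: "i \<in> {- int n..int n} - {0}" and j: "j \<in> {- int n..int n} - {0}"
    and eq: "perm_of_window n xs i = perm_of_window n xs j"
  have "nat \<bar>i\<bar> - 1 < length xs" and "nat \<bar>j\<bar> - 1 < length xs"
    using i j length_signed_arrangement[OF xs] by auto
  moreover have "map abs xs ! (nat \<bar>i\<bar> - 1) = map abs xs ! (nat \<bar>j\<bar> - 1)"
    using abs_perm_of_window[OF i, of xs] abs_perm_of_window[OF j, of xs] eq calculation by simp
  moreover have "distinct (map abs xs)"
    using xs unfolding signed_arrangements_def by simp
  ultimately have "nat \<bar>i\<bar> - 1 = nat \<bar>j\<bar> - 1"
    using nth_eq_iff_index_eq[of "map abs xs"] by simp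
  moreover have "i \<noteq> 0" and "j \<noteq> 0"
    using i j by simp_all
  ultimately have "i = j \<or> i = - j"
    by linarith
  moreover have "perm_of_window n xs j \<noteq> 0"
    using perm_of_window_in_range[OF xs j] by auto
  ultimately show "i = j"
    using eq perm_of_window_odd[of n xs j] by auto
qed

lemma perm_of_window_in_signed_perms:
  assumes xs: "xs \<in> signed_arrangements {1..int n}"
  shows "perm_of_window n xs \<in> signed_perms n"
proof -
  let ?N = "{- int n..int n} - {0}" and ?w = "perm_of_window n xs"
  have "?w ` ?N \<subseteq> ?N"
    using perm_of_window_in_range[OF xs] by (rule image_subsetI)
  then have bij: "bij_betw ?w ?N ?N"
    unfolding bij_betw_def using inj_on_perm_of_window[OF xs] endo_inj_surj[of ?N ?w] by simp
  have outside: "?w i = i" if "i \<notin> ?N" for i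
    unfolding perm_of_window_def if_not_P[OF that] ..
  show ?thesis
    unfolding signed_perms_def by (intro CollectI conjI allI impI bij perm_of_window_odd outside)
qed

lemma card_signed_perms_descents:
  "card {w \<in> signed_perms n. descents_B n w = S} = betaB {1..int n} S"
proof -
  have "bij_betw (window n) (signed_perms n) (signed_arrangements {1..int n})"
  proof (rule bij_betw_byWitness[where f' = "perm_of_window n"])
    show "window n ` signed_perms n \<subseteq> signed_arrangements {1..int n}"
      using window_in_signed_arrangements by blast
    show "perm_of_window n ` signed_arrangements {1..int n} \<subseteq> signed_perms n"
      using perm_of_window_in_signed_perms by blast
    show "\<forall>xs \<in> signed_arrangements {1..int n}. window n (perm_of_window n xs) = xs"
      using window_perm_of_window length_signed_arrangement by fastforce
  qed (simp add: perm_of_window_window)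
  then have "bij_betw (window n) {w \<in> signed_perms n. descents_B n w = S}
      {xs \<in> signed_arrangements {1..int n}. list_descents xs = S}"
    by (rule bij_betw_Collect) (simp add: descents_B_eq_list_descents)
  then show ?thesis
    unfolding betaB_def by (rule bij_betw_same_card)
qed

lemma insert_below_eq_iff:
  fixes a b :: "'a :: linorder"
  assumes "A \<subseteq> {..<a}" and "B \<subseteq> {..<b}"
  shows "insert a A = insert b B \<longleftrightarrow> a = b \<and> A = B"
proof
  assume eq: "insert a A = insert b B"
  then have "a \<le> b" and "b \<le> a"
    using assms by (metis insertCI insertE lessThan_iff less_imp_le order_refl subsetD)+
  then have "a = b"
    by simp
  moreover have "a \<notin> A" and "b \<notin> B"
    using assms by auto
  ultimately show "a = b \<and> A = B"
    using eq by (metis insert_ident)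
qed simp

lemma comp_descents_eq_image: "comp_descents \<alpha> = (\<lambda>k. sum_list (take k \<alpha>)) ` {1..<length \<alpha>}"
  unfolding comp_descents_def by auto

lemma comp_descents_singleton: "comp_descents [a] = {}"
  by (simp add: comp_descents_eq_image)

lemma comp_descents_snoc:
  assumes "\<alpha> \<noteq> []"
  shows "comp_descents (\<alpha> @ [x]) = insert (sum_list \<alpha>) (comp_descents \<alpha>)"
proof -
  have "{1..<length (\<alpha> @ [x])} = insert (length \<alpha>) {1..<length \<alpha>}"
    using assms by (auto simp: Suc_le_eq)
  then show ?thesis
    unfolding comp_descents_eq_image by (simp add: image_insert)
qed

lemma snoc_in_pseudo_comps:
  assumes "\<alpha> \<noteq> []"
  shows "\<alpha> @ [x] \<in> pseudo_comps n \<longleftrightarrow> \<alpha> \<in> pseudo_comps (sum_list \<alpha>) \<and> x > 0 \<and> n = sum_list \<alpha> + x"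
proof -
  have "tl (\<alpha> @ [x]) = tl \<alpha> @ [x]"
    using assms by (cases \<alpha>) auto
  then show ?thesis
    unfolding pseudo_comps_def using assms by auto
qed

lemma comp_descents_subset:
  assumes "\<alpha> \<in> pseudo_comps n"
  shows "comp_descents \<alpha> \<subseteq> {..<n}"
proof (unfold comp_descents_eq_image, rule image_subsetI)
  fix k assume k: "k \<in> {1..<length \<alpha>}"
  have "\<alpha> ! k = tl \<alpha> ! (k - 1)"
    using k by (cases \<alpha>) (auto simp: nth_Cons')
  moreover have "tl \<alpha> ! (k - 1) \<in> set (tl \<alpha>)"
    using k by (intro nth_mem) auto
  ultimately have "\<alpha> ! k > 0"
    using assms unfolding pseudo_comps_def by simp
  moreover have "sum_list \<alpha> = sum_list (take k \<alpha>) + \<alpha> ! k + sum_list (drop (Suc k) \<alpha>)"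
    using k by (metis Cons_nth_drop_Suc append_take_drop_id sum_list_append sum_list.Cons
        add.assoc atLeastLessThan_iff)
  ultimately show "sum_list (take k \<alpha>) \<in> {..<n}"
    using assms unfolding pseudo_comps_def by auto
qed

lemma comp_descents_empty_iff:
  assumes "\<alpha> \<in> pseudo_comps n"
  shows "comp_descents \<alpha> = {} \<longleftrightarrow> \<alpha> = [n]"
proof
  assume "comp_descents \<alpha> = {}"
  then have "length \<alpha> \<le> 1"
    unfolding comp_descents_eq_image by simp
  then show "\<alpha> = [n]"
    using assms unfolding pseudo_comps_def by (cases \<alpha>) auto
qed (simp add: comp_descents_singleton)

lemma pseudo_comps_snocE:
  assumes "\<beta> \<in> pseudo_comps n" and "\<beta> \<noteq> [n]"
  obtains \<beta>' y where "\<beta> = \<beta>' @ [y]" and "\<beta>' \<noteq> []"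
proof -
  have "\<beta> \<noteq> []"
    using assms(1) by (simp add: pseudo_comps_def)
  then have "\<beta> = butlast \<beta> @ [last \<beta>]"
    by simp
  moreover have "butlast \<beta> \<noteq> []"
  proof
    assume "butlast \<beta> = []"
    then have "\<beta> = [last \<beta>]"
      using \<open>\<beta> = butlast \<beta> @ [last \<beta>]\<close> by simp
    moreover have "sum_list \<beta> = n"
      using assms(1) by (simp add: pseudo_comps_def)
    ultimately have "\<beta> = [n]"
      by (metis sum_list.Cons sum_list.Nil add_0_right)
    then show False
      using assms(2) by simp
  qed
  ultimately show ?thesis
    using that by blast
qed

lemma inj_on_comp_descents: "inj_on comp_descents (pseudo_comps n)"
proof (rule inj_onI)
  fix \<alpha> \<beta> assume "\<alpha> \<in> pseudo_comps n" and "\<beta> \<in> pseudo_comps n"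
    and "comp_descents \<alpha> = comp_descents \<beta>"
  then show "\<alpha> = \<beta>"
  proof (induction \<alpha> arbitrary: n \<beta> rule: rev_induct)
    case Nil
    then show ?case
      by (simp add: pseudo_comps_def)
  next
    case (snoc x \<alpha>)
    show ?case
    proof (cases "\<alpha> = []")
      case True
      then have "comp_descents \<beta> = {}"
        using snoc.prems(3) comp_descents_singleton by simp
      then have "\<beta> = [n]"
        using comp_descents_empty_iff[OF snoc.prems(2)] by simp
      moreover have "\<alpha> @ [x] = [n]"
        using comp_descents_empty_iff[OF snoc.prems(1)] True comp_descents_singleton by simp
      ultimately show ?thesis
        by simp
    next
      case False
      then have "comp_descents \<beta> \<noteq> {}"
        using snoc.prems comp_descents_snoc by auto
      then have "\<beta> \<noteq> [n]"
        by (auto simp: comp_descents_singleton)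
      then obtain \<beta>' y where \<beta>: "\<beta> = \<beta>' @ [y]" and "\<beta>' \<noteq> []"
        using pseudo_comps_snocE[OF snoc.prems(2)] by blast
      have \<alpha>': "\<alpha> \<in> pseudo_comps (sum_list \<alpha>)" and n_\<alpha>: "n = sum_list \<alpha> + x"
        using snoc.prems(1) snoc_in_pseudo_comps[OF False] by auto
      have \<beta>': "\<beta>' \<in> pseudo_comps (sum_list \<beta>')" and n_\<beta>: "n = sum_list \<beta>' + y"
        using snoc.prems(2) snoc_in_pseudo_comps[OF \<open>\<beta>' \<noteq> []\<close>] \<beta> by auto
      have "insert (sum_list \<alpha>) (comp_descents \<alpha>) = insert (sum_list \<beta>') (comp_descents \<beta>')"
        using snoc.prems(3) comp_descents_snoc[OF False] comp_descents_snoc[OF \<open>\<beta>' \<noteq> []\<close>] \<beta> by simp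
      then have "sum_list \<alpha> = sum_list \<beta>'" and "comp_descents \<alpha> = comp_descents \<beta>'"
        using insert_below_eq_iff[OF comp_descents_subset[OF \<alpha>'] comp_descents_subset[OF \<beta>']] by auto
      then show ?thesis
        using snoc.IH[OF \<alpha>'] \<beta>' \<beta> n_\<alpha> n_\<beta> by simp
    qed
  qed
qed

lemma comp_descents_surj:
  assumes "S \<subseteq> {..<n}"
  shows "\<exists>\<alpha> \<in> pseudo_comps n. comp_descents \<alpha> = S"
  using assms
proof (induction n arbitrary: S rule: less_induct)
  case (less n)
  show ?case
  proof (cases "S = {}")
    case True
    have "[n] \<in> pseudo_comps n"
      by (simp add: pseudo_comps_def)
    then show ?thesis
      using True comp_descents_singleton by blast
  next
    case False
    define s where "s = Max S"
    have fin: "finite S"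
      using less.prems finite_subset by blast
    have "s \<in> S" and "s < n" and "S - {s} \<subseteq> {..<s}"
      using fin False less.prems unfolding s_def by (auto intro: le_neq_trans)
    then obtain \<alpha> where \<alpha>: "\<alpha> \<in> pseudo_comps s" and "comp_descents \<alpha> = S - {s}"
      using less.IH by blast
    moreover have "\<alpha> \<noteq> []" and "sum_list \<alpha> = s"
      using \<alpha> unfolding pseudo_comps_def by auto
    ultimately have "\<alpha> @ [n - s] \<in> pseudo_comps n" and "comp_descents (\<alpha> @ [n - s]) = S"
      using snoc_in_pseudo_comps comp_descents_snoc \<open>s \<in> S\<close> \<open>s < n\<close> by auto
    then show ?thesis
      by blast
  qed
qed

lemma bij_betw_comp_descents: "bij_betw comp_descents (pseudo_comps n) (Pow {..<n})"
  unfolding bij_betw_def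
  using inj_on_comp_descents comp_descents_subset comp_descents_surj by blast

lemma ribbonB_eq_betaB: "ribbonB \<alpha> = betaB {1..int (sum_list \<alpha>)} (comp_descents \<alpha>)"
  unfolding ribbonB_def by (rule card_signed_perms_descents)

lemma finite_pseudo_comps: "finite (pseudo_comps n)"
  using bij_betw_finite[OF bij_betw_comp_descents] by simp

lemma card_pseudo_comps_ribbonB:
  "card {\<gamma> \<in> pseudo_comps n. P (ribbonB \<gamma>)} = card {S \<in> Pow {..<n}. P (betaB {1..int n} S)}"
proof -
  have "bij_betw comp_descents {\<gamma> \<in> pseudo_comps n. P (ribbonB \<gamma>)}
      {S \<in> Pow {..<n}. P (betaB {1..int n} S)}"
    using bij_betw_comp_descents by (rule bij_betw_Collect) (simp add: ribbonB_eq_betaB pseudo_comps_def)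
  then show ?thesis
    by (rule bij_betw_same_card)
qed

section \<open>Counting residues\<close>

lemma bij_betw_scaled_union:
  fixes q m :: nat
  assumes "q > 0"
  shows "bij_betw (\<lambda>(S0, E). (*) q ` S0 \<union> E)
    (Pow {..<m} \<times> Pow {x. x < m * q \<and> \<not> q dvd x}) (Pow {..<m * q})"
proof -
  let ?f = "\<lambda>(S0, E). (*) q ` S0 \<union> E"
  let ?g = "\<lambda>S. ({s. q * s \<in> S}, {x \<in> S. \<not> q dvd x})"
  let ?A = "Pow {..<m} \<times> Pow {x. x < m * q \<and> \<not> q dvd x}"
  have "?g (?f (S0, E)) = (S0, E)" if "(S0, E) \<in> ?A" for S0 E
    using that assms by auto
  moreover have "?f (?g S) = S" for S
    by (auto elim: dvdE)
  moreover have "?f ` ?A \<subseteq> Pow {..<m * q}" and "?g ` Pow {..<m * q} \<subseteq> ?A"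
    using assms by (auto simp: mult.commute)
  ultimately show ?thesis
    by (intro bij_betw_byWitness[where f' = ?g]) auto
qed

lemma card_subsets_scaled_union:
  fixes q m :: nat
  assumes "q > 0"
  shows "card {S \<in> Pow {..<m * q}. Q S} =
    card {(S0, E) \<in> Pow {..<m} \<times> Pow {x. x < m * q \<and> \<not> q dvd x}. Q ((*) q ` S0 \<union> E)}"
proof -
  let ?\<Phi> = "\<lambda>(S0, E). (*) q ` S0 \<union> E" and ?A = "Pow {..<m} \<times> Pow {x. x < m * q \<and> \<not> q dvd x}"
  have "bij_betw ?\<Phi> {x \<in> ?A. Q (?\<Phi> x)} {S \<in> Pow {..<m * q}. Q S}"
    by (rule bij_betw_Collect[OF bij_betw_scaled_union[OF assms]]) simp
  moreover have "{x \<in> ?A. Q (?\<Phi> x)} = {(S0, E) \<in> ?A. Q ((*) q ` S0 \<union> E)}"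
    by auto
  ultimately show ?thesis
    by (simp add: bij_betw_same_card)
qed

lemma card_non_multiples:
  fixes q m :: nat
  assumes "q > 0"
  shows "card {x. x < m * q \<and> \<not> q dvd x} = m * q - m"
proof -
  let ?N = "{x. x < m * q \<and> \<not> q dvd x}"
  have "{..<m * q} = (*) q ` {..<m} \<union> ?N"
    using assms by (auto simp: mult.commute elim!: dvdE)
  then have "m * q = card ((*) q ` {..<m} \<union> ?N)"
    by (metis card_lessThan)
  moreover have "card ((*) q ` {..<m} \<union> ?N) = card ((*) q ` {..<m}) + card ?N"
    by (intro card_Un_disjoint) auto
  moreover have "card ((*) q ` {..<m}) = m"
    using assms by (simp add: card_image inj_on_def)
  ultimately show ?thesis
    by simp
qed

lemma card_even_odd_subsets:
  assumes "finite N" and "N \<noteq> {}"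
  shows "card {E \<in> Pow N. even (card E)} = 2 ^ (card N - 1)"
    and "card {E \<in> Pow N. odd (card E)} = 2 ^ (card N - 1)"
proof -
  have same: "card {E \<in> Pow N. even (card E)} = card {E \<in> Pow N. odd (card E)}"
    using card_subsupersets_even_odd[OF assms(1), of "{}"] assms(2) by (simp add: Pow_def psubset_eq)
  have "card (Pow N) = card ({E \<in> Pow N. even (card E)} \<union> {E \<in> Pow N. odd (card E)})"
    by (rule arg_cong[where f = card]) auto
  also have "\<dots> = card {E \<in> Pow N. even (card E)} + card {E \<in> Pow N. odd (card E)}"
    using assms(1) by (intro card_Un_disjoint) auto
  finally have "2 ^ card N = 2 * card {E \<in> Pow N. even (card E)}"
    using same assms(1) by (simp add: card_Pow)
  moreover have "(2::nat) ^ card N = 2 * 2 ^ (card N - 1)"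
    using assms by (simp add: card_gt_0_iff flip: power_Suc)
  ultimately show "card {E \<in> Pow N. even (card E)} = 2 ^ (card N - 1)"
    and "card {E \<in> Pow N. odd (card E)} = 2 ^ (card N - 1)"
    using same by simp_all
qed

lemma card_sign_twisted_pairs:
  fixes R :: "'a \<Rightarrow> int"
  assumes "finite A" and "finite N" and "N \<noteq> {}"
  shows "card {(a, E) \<in> A \<times> Pow N. P ((-1) ^ card E * R a)} =
    2 ^ (card N - 1) * (card {a \<in> A. P (R a)} + card {a \<in> A. P (- R a)})"
proof -
  have "{(a, E) \<in> A \<times> Pow N. P ((-1) ^ card E * R a)} =
      {a \<in> A. P (R a)} \<times> {E \<in> Pow N. even (card E)} \<union> {a \<in> A. P (- R a)} \<times> {E \<in> Pow N. odd (card E)}"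
    by (auto simp: minus_one_power_iff)
  moreover have "card (\<dots>) = card {a \<in> A. P (R a)} * 2 ^ (card N - 1) + card {a \<in> A. P (- R a)} * 2 ^ (card N - 1)"
    using assms card_even_odd_subsets[OF assms(2,3)]
    by (subst card_Un_disjoint) (auto simp: card_cartesian_product)
  ultimately show ?thesis
    by (simp add: algebra_simps)
qed

lemma cB_mult_prime_power:
  assumes "prime p" and "odd p" and "m \<ge> 1" and "d \<ge> 1"
  shows "cB p i (m * p ^ d) = 2 ^ (m * p ^ d - m - 1) *
    (card {\<gamma> \<in> pseudo_comps m. [int (ribbonB \<gamma>) = i] (mod int p)}
     + card {\<gamma> \<in> pseudo_comps m. [int (ribbonB \<gamma>) = - i] (mod int p)})"
proof -
  let ?q = "p ^ d" and ?n = "m * p ^ d"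
  define N where "N = {x. x < ?n \<and> \<not> ?q dvd x}"
  define P where "P x \<longleftrightarrow> [x = i] (mod int p)" for x
  have "?q > 1"
    using one_less_power[OF prime_gt_1_nat[OF assms(1)]] assms(4) by simp
  moreover have "?q \<le> ?n"
    using assms(3) by simp
  ultimately have "1 < ?n"
    by linarith
  moreover have "\<not> ?q dvd 1"
    using \<open>?q > 1\<close> assms(4) by (auto dest: dvd_imp_le)
  ultimately have "1 \<in> N"
    unfolding N_def by blast
  then have N: "finite N" "N \<noteq> {}"
    unfolding N_def by auto
  have card_N: "card N = ?n - m"
    unfolding N_def by (rule card_non_multiples) (use \<open>?q > 1\<close> in linarith)
  let ?Q = "\<lambda>S. P (int (betaB {1..int ?n} S))"
  have twisted: "?Q ((*) ?q ` S0 \<union> E) \<longleftrightarrow> P ((-1) ^ card E * int (betaB {1..int m} S0))"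
    if "S0 \<subseteq> {..<m}" and "E \<subseteq> N" for S0 E
    using betaB_interval_cong[OF assms(1,2) that[unfolded N_def]] unfolding P_def
    by (auto intro: cong_trans cong_sym)
  have "cB p i ?n = card {S \<in> Pow {..<?n}. ?Q S}"
    unfolding cB_def P_def by (rule card_pseudo_comps_ribbonB)
  also have "\<dots> = card {(S0, E) \<in> Pow {..<m} \<times> Pow N. ?Q ((*) ?q ` S0 \<union> E)}"
    unfolding N_def by (rule card_subsets_scaled_union) (use \<open>?q > 1\<close> in linarith)
  also have "\<dots> = card {(S0, E) \<in> Pow {..<m} \<times> Pow N. P ((-1) ^ card E * int (betaB {1..int m} S0))}"
    using twisted by (intro arg_cong[where f = card]) auto
  also have "\<dots> = 2 ^ (card N - 1) * (card {S0 \<in> Pow {..<m}. P (int (betaB {1..int m} S0))}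
      + card {S0 \<in> Pow {..<m}. P (- int (betaB {1..int m} S0))})"
    using N by (rule card_sign_twisted_pairs[OF finite_Pow_iff[THEN iffD2, OF finite_lessThan]])
  also have "\<dots> = 2 ^ (?n - m - 1) *
      (card {\<gamma> \<in> pseudo_comps m. [int (ribbonB \<gamma>) = i] (mod int p)}
       + card {\<gamma> \<in> pseudo_comps m. [int (ribbonB \<gamma>) = - i] (mod int p)})"
    using cong_minus_minus_iff[of _ "- i" "int p"]
    unfolding card_N P_def
    by (simp add: card_pseudo_comps_ribbonB[of m "\<lambda>r. [int r = i] (mod int p)"]
        card_pseudo_comps_ribbonB[of m "\<lambda>r. [int r = - i] (mod int p)"])
  finally show ?thesis .
qed

lemma not_cong_both_signs:
  assumes "prime p" and "odd p" and "0 < i" and "i < int p"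
  shows "\<not> ([x = i] (mod int p) \<and> [x = - i] (mod int p))"
proof
  assume "[x = i] (mod int p) \<and> [x = - i] (mod int p)"
  then have "[i = - i] (mod int p)"
    by (metis cong_sym cong_trans)
  then have "int p dvd 2 * i"
    by (simp add: cong_iff_dvd_diff)
  moreover have "prime (int p)"
    using assms(1) by simp
  ultimately have "int p dvd 2 \<or> int p dvd i"
    using prime_dvd_mult_iff by blast
  moreover have "\<not> int p dvd 2"
    using odd_prime_not_dvd_2[OF assms(1,2)] by (metis int_dvd_int_iff of_nat_numeral)
  moreover have "\<not> int p dvd i"
    using assms(3,4) by (auto dest: zdvd_imp_le)
  ultimately show False
    by blast
qed

theorem corollary4p5:
  fixes p m d n :: nat and i :: int
  assumes "prime p" and "odd p"
    and "1 \<le> m" and "m \<le> p - 1"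
    and "n = m * p ^ d"
    and "0 \<le> i" and "i < int p"
  shows "cB p i n =
    (if i = 0 \<or> d = 0
     then 2 ^ (n - m) * card {\<gamma> \<in> pseudo_comps m. [int (ribbonB \<gamma>) = i] (mod int p)}
     else 2 ^ (n - m - 1) * card {\<gamma> \<in> pseudo_comps m.
            [int (ribbonB \<gamma>) = i] (mod int p) \<or> [int (ribbonB \<gamma>) = - i] (mod int p)})"
proof (cases "d = 0")
  case True
  then show ?thesis
    using assms(5) unfolding cB_def by simp
next
  case False
  let ?count = "\<lambda>j. card {\<gamma> \<in> pseudo_comps m. [int (ribbonB \<gamma>) = j] (mod int p)}"
  have split: "cB p i n = 2 ^ (n - m - 1) * (?count i + ?count (- i))"
    using cB_mult_prime_power[OF assms(1,2)] assms(3,5) False by simp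
  have "p ^ d > 1"
    using one_less_power[OF prime_gt_1_nat[OF assms(1)]] False by simp
  then have "m < n"
    using assms(3,5) by simp
  show ?thesis
  proof (cases "i = 0")
    case True
    have "2 ^ (n - m - 1) * (?count i + ?count i) = 2 ^ (n - m) * ?count i"
      using \<open>m < n\<close> by (cases "n - m") auto
    then show ?thesis
      using split True by simp
  next
    case False
    have "?count i + ?count (- i) = card {\<gamma> \<in> pseudo_comps m.
        [int (ribbonB \<gamma>) = i] (mod int p) \<or> [int (ribbonB \<gamma>) = - i] (mod int p)}"
      using not_cong_both_signs[OF assms(1,2) _ assms(7)] False assms(6) finite_pseudo_comps
      by (subst card_Un_disjoint[symmetric]) (auto intro: arg_cong[where f = card])
    then show ?thesis
      using split False \<open>d \<noteq> 0\<close> by simp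
  qed
qed

end
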